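(* Let $h:[0,1]\to(0,\infty)$ and $f:[0,\infty)\to[0,\infty)$ be continuously differentiable, suppose there is $t_0\ge0$ with $f>0$ on $[t_0,\infty)$ and $f\in C^2([t_0,\infty))$, put $g=\log f$ on $[t_0,\infty)$, and assume condition (H1) of the context. Let $(\lambda_n,\mu_n,u_n)\in(0,\infty)\times(0,\infty)\times C^2([0,1])$ satisfy $-u_n''-\frac1r u_n'=\lambda_n h(r)f(u_n)$, $u_n>0$ in $(0,1)$, $u_n(0)=\mu_n$, $u_n'(0)=0=u_n(1)$, with $\mu_n\to\infty$. Define $\gamma_{0,n}>0$ by $\lambda_n h(0)f'(\mu_n)\gamma_{0,n}^2=1$, and for $r\in[0,1]$ with $u_n(r)\ge t_0$ let $$\phi_n(r)=\lambda_n r^2 h(r)f'(u_n(r)),\qquad \psi_n(r)=-r\,g'(u_n(r))\,u_n'(r).$$ Then, up to a subsequence, there exists $(r_{1,n})\subset(0,1)$ such that $\phi_n(r_{1,n})$ is a local maximum value of $\phi_n$ (in particular $\phi_n'(r_{1,n})=0$) for all $n$, and as $n\to\infty$: $\phi_n(r_{1,n})\to2$, $\psi_n(r_{1,n})\to2$, $r_{1,n}/\gamma_{0,n}\to2\sqrt2$, $$u_n(r_{1,n})=\mu_n+O\Big(\frac1{g(\mu_n)}\Big)\frac{g(\mu_n)}{g'(\mu_n)},$$ $g(u_n(r_{1,n}))/g(\mu_n)\to1$ and $g'(u_n(r_{1,n}))/g'(\mu_n)\to1$.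
   Context: Condition (H1): (i) $g'(t)>0$ and $g''(t)>0$ for all $t\ge t_0$, and there is a pair $(q,p)$ with either $q=1$ and $p\in(0,\infty]$, or $q\in(1,\infty)$ and $p\in(0,\infty)$, such that $\lim_{t\to\infty}\frac{g'(t)^2}{g(t)g''(t)}=q$ and $\lim_{t\to\infty}\frac{tg'(t)}{g(t)}=p$; (ii) if $q=1$, then $tg'(t)/g(t)$ is nondecreasing on $[t_0,\infty)$ and there exist $k\in\mathbb{N}$ and $\hat g\in C^2([t_0,\infty))$ with $f=\exp_k\circ\hat g$ and $\hat g'/\hat g$ nonincreasing on $[t_0,\infty)$ ($\exp_1=\exp$, $\exp_k=\exp_{k-1}\circ\exp$). *)

theory Defs
  imports "HOL-Analysis.Analysis" "HOL-Library.Landau_Symbols"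
begin

definition C2_with :: "real set \<Rightarrow> (real \<Rightarrow> real) \<Rightarrow> (real \<Rightarrow> real) \<Rightarrow> (real \<Rightarrow> real) \<Rightarrow> bool" where
  "C2_with S u u' u'' \<longleftrightarrow>
     (\<forall>r\<in>S. (u has_real_derivative u' r) (at r within S) \<and>
             (u' has_real_derivative u'' r) (at r within S)) \<and> continuous_on S u''"

definition C1_with :: "real set \<Rightarrow> (real \<Rightarrow> real) \<Rightarrow> (real \<Rightarrow> real) \<Rightarrow> bool" where
  "C1_with S u u' \<longleftrightarrow>
     (\<forall>r\<in>S. (u has_real_derivative u' r) (at r within S)) \<and> continuous_on S u'"

text \<open>Condition (H1); g, g', g'' are log f and its derivatives on [t0,oo).\<close>
definition H1 :: "real \<Rightarrow> (real \<Rightarrow> real) \<Rightarrow> (real \<Rightarrow> real) \<Rightarrow> (real \<Rightarrow> real) \<Rightarrow> (real \<Rightarrow> real) \<Rightarrow> bool" where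
  "H1 t0 f g g' g'' \<longleftrightarrow>
     (\<forall>t\<ge>t0. g' t > 0 \<and> g'' t > 0) \<and>
     (\<exists>q::real. ((\<lambda>t. (g' t)^2 / (g t * g'' t)) \<longlongrightarrow> q) at_top \<and>
        ((q = 1 \<and> ((\<exists>p>0. ((\<lambda>t. t * g' t / g t) \<longlongrightarrow> p) at_top)
                     \<or> filterlim (\<lambda>t. t * g' t / g t) at_top at_top))
         \<or> (q > 1 \<and> (\<exists>p>0. ((\<lambda>t. t * g' t / g t) \<longlongrightarrow> p) at_top))) \<and>
        (q = 1 \<longrightarrow>
           (\<forall>s t. t0 \<le> s \<longrightarrow> s \<le> t \<longrightarrow> s * g' s / g s \<le> t * g' t / g t) \<and>
           (\<exists>k::nat. k \<ge> 1 \<and> (\<exists>gh gh' gh''. C2_with {t0..} gh gh' gh'' \<and>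
               (\<forall>t\<ge>t0. f t = (exp ^^ k) (gh t)) \<and>
               (\<forall>s t. t0 \<le> s \<longrightarrow> s \<le> t \<longrightarrow> gh' t / gh t \<le> gh' s / gh s)))))"

definition phi :: "real \<Rightarrow> (real \<Rightarrow> real) \<Rightarrow> (real \<Rightarrow> real) \<Rightarrow> (real \<Rightarrow> real) \<Rightarrow> real \<Rightarrow> real" where
  "phi lam h f' u r = lam * r^2 * h r * f' (u r)"

definition psi :: "(real \<Rightarrow> real) \<Rightarrow> (real \<Rightarrow> real) \<Rightarrow> (real \<Rightarrow> real) \<Rightarrow> real \<Rightarrow> real" where
  "psi g' u u' r = - r * g' (u r) * u' r"

end

theory Submission
  imports Defs
begin

(*
  With a = g'(mu) and the scale gamma given by
  lam h(0) f'(mu) gamma^2 = 1, the function U(s) = a (u(gamma s) - mu) solves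
  U'' + U'/s = -(h(gamma s)/h(0)) f(u(gamma s))/f(mu),  U(0) = U'(0) = 0.
  The equation itself gives lam f(mu) >= 2 mu / max h, so gamma -> 0 and h(gamma s)/h(0) -> 1.
  Since g''/g'^2 -> 0, g' is almost constant on windows [mu - A/a, mu], so f(u)/f(mu) is
  uniformly close to exp U as long as U stays above -A.  A Gronwall estimate for
  (U - W)^2 + (U' - W')^2 then keeps U close to the Liouville bubble W(s) = -2 log(1 + s^2/8)
  on [0,4], which lies above -4, so the window is never left.
  Hence phi_n(gamma s) and psi_n(gamma s) converge to s^2/(1 + s^2/8)^2 and
  (s^2/2)/(1 + s^2/8) uniformly on [0,4].  The first has its strict maximum 2 at s = 2 sqrt 2,
  where the second equals 2, so a maximiser r of phi_n on [gamma, 4 gamma] is interior and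
  r/gamma -> 2 sqrt 2; the bound |U| <= 5 gives the estimates for u(r), g and g'.
*)

lemma C1_with_has_real_derivative:
  assumes "C1_with S u u'" "x \<in> interior S"
  shows "(u has_real_derivative u' x) (at x)"
  using assms interior_subset[of S] unfolding C1_with_def
  by (auto simp: at_within_interior[OF assms(2), symmetric])

lemma C1_with_continuous_on:
  assumes "C1_with S u u'"
  shows "continuous_on S u" "continuous_on S u'"
  using assms unfolding C1_with_def by (auto intro!: DERIV_continuous_on)

lemma C2_with_has_real_derivative:
  assumes "C2_with S u u' u''" "x \<in> interior S"
  shows "(u has_real_derivative u' x) (at x)" "(u' has_real_derivative u'' x) (at x)"
  using assms interior_subset[of S] unfolding C2_with_def
  by (auto simp: at_within_interior[OF assms(2), symmetric])

lemma C2_with_continuous_on: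
  assumes "C2_with S u u' u''"
  shows "continuous_on S u" "continuous_on S u'"
  using assms unfolding C2_with_def by (auto intro!: DERIV_continuous_on)

lemma MVT_open_interval:
  fixes f f' :: "real \<Rightarrow> real"
  assumes "a < b" "continuous_on {a..b} f"
    and "\<And>x. a < x \<Longrightarrow> x < b \<Longrightarrow> (f has_real_derivative f' x) (at x)"
  shows "\<exists>z. a < z \<and> z < b \<and> f b - f a = (b - a) * f' z"
proof -
  obtain l z where "a < z" "z < b" "DERIV f z :> l" "f b - f a = (b - a) * l"
    using MVT[OF assms(1,2)] assms(3) real_differentiable_def by blast
  then show ?thesis using assms(3) DERIV_unique by metis
qed

lemma abs_exp_diff_le_nonpos:
  fixes x y :: real
  assumes "x \<le> 0" "y \<le> 0"
  shows "\<bar>exp x - exp y\<bar> \<le> \<bar>x - y\<bar>"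
proof -
  have *: "exp b - exp a \<le> b - a" if "a \<le> b" "b \<le> 0" for a b :: real
  proof -
    have "exp b - exp a = exp b * (1 - exp (a - b))" by (simp add: algebra_simps exp_diff)
    also have "\<dots> \<le> 1 - exp (a - b)"
      using that by (intro mult_left_le_one_le) auto
    also have "\<dots> \<le> b - a" using exp_ge_add_one_self[of "a - b"] by linarith
    finally show ?thesis .
  qed
  show ?thesis using *[of x y] *[of y x] assms by (cases "x \<le> y") auto
qed

lemma tendsto_if_eventually_abs_le:
  fixes x :: "'a \<Rightarrow> real"
  assumes "\<And>\<eta>. 0 < \<eta> \<Longrightarrow> \<eta> \<le> 1 \<Longrightarrow> \<forall>\<^sub>F n in F. \<bar>x n - L\<bar> \<le> \<eta>"
  shows "(x \<longlongrightarrow> L) F"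
  unfolding tendsto_iff dist_real_def
proof (intro allI impI)
  fix e :: real assume "0 < e"
  then have "\<forall>\<^sub>F n in F. \<bar>x n - L\<bar> \<le> min (e / 2) 1" by (intro assms) auto
  then show "\<forall>\<^sub>F n in F. \<bar>x n - L\<bar> < e"
    by eventually_elim (use \<open>0 < e\<close> in linarith)
qed

section \<open>Convex growth of g = log f\<close>

locale convex_growth =
  fixes g g' g'' :: "real \<Rightarrow> real" and t0 :: real
  assumes g_C2: "C2_with {t0..} g g' g''"
    and g'_pos: "\<And>t. t0 \<le> t \<Longrightarrow> g' t > 0"
    and g''_pos: "\<And>t. t0 \<le> t \<Longrightarrow> g'' t > 0"
begin

lemma g_MVT:
  assumes "t0 \<le> s" "s < t"
  shows "\<exists>z. s < z \<and> z < t \<and> g t - g s = (t - s) * g' z"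
    and "\<exists>z. s < z \<and> z < t \<and> g' t - g' s = (t - s) * g'' z"
proof -
  have cont: "continuous_on {s..t} g" "continuous_on {s..t} g'"
    using C2_with_continuous_on[OF g_C2] assms by (auto elim: continuous_on_subset)
  have "(g has_real_derivative g' x) (at x)" "(g' has_real_derivative g'' x) (at x)" if "s < x" for x
    using C2_with_has_real_derivative[OF g_C2, of x] that assms by auto
  then show "\<exists>z. s < z \<and> z < t \<and> g t - g s = (t - s) * g' z"
    and "\<exists>z. s < z \<and> z < t \<and> g' t - g' s = (t - s) * g'' z"
    using MVT_open_interval[OF assms(2)] cont by auto
qed

lemma g'_mono:
  assumes "t0 \<le> s" "s \<le> t"
  shows "g' s \<le> g' t"
proof (cases "s = t")
  case False
  then obtain z where "s < z" "z < t" "g' t - g' s = (t - s) * g'' z"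
    using g_MVT(2)[of s t] assms by force
  moreover have "g'' z > 0" using g''_pos \<open>s < z\<close> assms by auto
  ultimately show ?thesis using assms by (smt (verit) mult_pos_pos)
qed simp

lemma g_tangent_bounds:
  assumes "t0 \<le> s" "s \<le> t"
  shows "g' s * (t - s) \<le> g t - g s" "g t - g s \<le> g' t * (t - s)"
proof -
  have "g' s * (t - s) \<le> g t - g s \<and> g t - g s \<le> g' t * (t - s)"
  proof (cases "s = t")
    case False
    then obtain z where z: "s < z" "z < t" "g t - g s = (t - s) * g' z"
      using g_MVT(1)[of s t] assms by force
    have "g' s \<le> g' z" "g' z \<le> g' t" using g'_mono z assms by auto
    then show ?thesis using z assms by (simp add: mult.commute mult_right_mono)
  qed simp
  then show "g' s * (t - s) \<le> g t - g s" "g t - g s \<le> g' t * (t - s)" by auto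
qed

lemma g'_increment_le:
  assumes g'': "\<And>z. T \<le> z \<Longrightarrow> g'' z \<le> \<delta> * (g' z)^2"
    and "0 \<le> \<delta>" "t0 \<le> t" "T \<le> t" "t \<le> m"
  shows "g' m - g' t \<le> \<delta> * (m - t) * (g' m)^2"
proof (cases "t = m")
  case False
  then obtain z where z: "t < z" "z < m" "g' m - g' t = (m - t) * g'' z"
    using g_MVT(2)[of t m] assms by force
  have "g'' z \<le> \<delta> * (g' z)^2" using g'' z assms by simp
  also have "\<dots> \<le> \<delta> * (g' m)^2"
    using g'_pos[of z] g'_mono[of z m] z assms by (intro mult_left_mono power_mono) auto
  finally have "(m - t) * g'' z \<le> (m - t) * (\<delta> * (g' m)^2)"
    using z by (intro mult_left_mono) auto
  then show ?thesis using z by (simp add: mult_ac)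
qed simp

lemma g_mono: "t0 \<le> s \<Longrightarrow> s \<le> t \<Longrightarrow> g s \<le> g t"
  using g_tangent_bounds(1)[of s t] g'_pos[of s] by (smt (verit) mult_nonneg_nonneg)

lemma g_at_top: "filterlim g at_top at_top"
proof (rule filterlim_at_top_mono)
  have "filterlim (\<lambda>t. (g t0 - g' t0 * t0) + g' t0 * t) at_top at_top"
    using g'_pos[of t0]
    by (intro filterlim_tendsto_add_at_top[OF tendsto_const]
        filterlim_tendsto_pos_mult_at_top[OF tendsto_const _ filterlim_ident]) auto
  then show "filterlim (\<lambda>t. g t0 + g' t0 * (t - t0)) at_top at_top"
    by (simp add: algebra_simps)
  show "\<forall>\<^sub>F t in at_top. g t0 + g' t0 * (t - t0) \<le> g t"
    using eventually_ge_at_top[of t0]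
    by eventually_elim (use g_tangent_bounds(1)[of t0] in force)
qed

end

locale H1_nonlinearity =
  fixes f f' g g' g'' :: "real \<Rightarrow> real" and t0 :: real
  assumes f_C1: "C1_with {0..} f f'"
    and f_nonneg: "\<And>t. 0 \<le> t \<Longrightarrow> 0 \<le> f t"
    and t0_nonneg: "0 \<le> t0"
    and f_pos: "\<And>t. t0 \<le> t \<Longrightarrow> 0 < f t"
    and g_def: "\<And>t. t0 \<le> t \<Longrightarrow> g t = ln (f t)"
    and g_C2: "C2_with {t0..} g g' g''"
    and H1: "H1 t0 f g g' g''"
begin

sublocale convex_growth g g' g'' t0
  using g_C2 H1 unfolding H1_def by unfold_locales auto

lemma f_eq_exp_g: "t0 \<le> t \<Longrightarrow> f t = exp (g t)"
  using f_pos g_def by simp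

lemma f_mono: "t0 \<le> s \<Longrightarrow> s \<le> t \<Longrightarrow> f s \<le> f t"
  using g_mono[of s t] f_eq_exp_g[of s] f_eq_exp_g[of t] by simp

lemma f'_eq_f_times_g':
  assumes "t0 < t"
  shows "f' t = f t * g' t"
proof -
  have df: "(f has_real_derivative f' t) (at t)"
    using C1_with_has_real_derivative[OF f_C1, of t] assms t0_nonneg by simp
  have "((\<lambda>x. ln (f x)) has_real_derivative f' t / f t) (at t)"
    using f_pos assms by (auto intro!: derivative_eq_intros df)
  then have "(g has_real_derivative f' t / f t) (at t)"
    by (rule has_field_derivative_transform_within_open[of _ _ _ "{t0<..}"])
      (use g_def assms in auto)
  moreover have "(g has_real_derivative g' t) (at t)"
    using C2_with_has_real_derivative(1)[OF g_C2, of t] assms by simp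
  ultimately have "g' t = f' t / f t" using DERIV_unique by blast
  then show ?thesis using f_pos[of t] assms by simp
qed

(* The only consequence of (H1) that is needed. *)
lemma g''_div_g'_sq_tendsto_0: "((\<lambda>t. g'' t / (g' t)^2) \<longlongrightarrow> 0) at_top"
proof -
  obtain q where q: "q \<ge> 1" "((\<lambda>t. (g' t)^2 / (g t * g'' t)) \<longlongrightarrow> q) at_top"
    using H1 unfolding H1_def by (elim conjE exE) (metis less_eq_real_def)
  have "((\<lambda>t. inverse ((g' t)^2 / (g t * g'' t)) * inverse (g t)) \<longlongrightarrow> inverse q * 0) at_top"
    using q by (intro tendsto_mult tendsto_inverse tendsto_inverse_0_at_top[OF g_at_top]) auto
  then have lim: "((\<lambda>t. inverse ((g' t)^2 / (g t * g'' t)) * inverse (g t)) \<longlongrightarrow> 0) at_top"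
    by simp
  have "\<forall>\<^sub>F t in at_top. t0 \<le> t \<and> 0 < g t"
    using eventually_ge_at_top[of t0] g_at_top
    by (intro eventually_conj) (auto simp: filterlim_at_top_dense)
  then have "\<forall>\<^sub>F t in at_top. inverse ((g' t)^2 / (g t * g'' t)) * inverse (g t) = g'' t / (g' t)^2"
    by eventually_elim (use g'_pos g''_pos in \<open>simp add: field_simps power2_eq_square\<close>)
  with lim show ?thesis by (rule Lim_transform_eventually)
qed

lemma eventually_f_dominates_initial:
  assumes "c > 0"
  shows "\<forall>\<^sub>F m in at_top. \<forall>t\<in>{0..t0}. f t \<le> c * f m"
proof -
  have "continuous_on {0..t0} f"
    using C1_with_continuous_on(1)[OF f_C1] by (rule continuous_on_subset) auto
  then obtain M where M: "\<And>t. t \<in> {0..t0} \<Longrightarrow> norm (f t) \<le> M"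
    using continuous_on_compact_bound[OF compact_Icc] by blast
  have "filterlim (\<lambda>m. c * exp (g m)) at_top at_top"
    using assms by (intro filterlim_tendsto_pos_mult_at_top[OF tendsto_const]
        filterlim_compose[OF exp_at_top g_at_top])
  then have "\<forall>\<^sub>F m in at_top. M \<le> c * exp (g m)"
    by (simp add: filterlim_at_top)
  with eventually_ge_at_top[of t0] show ?thesis
    by eventually_elim (use M f_eq_exp_g in fastforce)
qed

lemma f_le_if_dominates_initial:
  assumes "t0 \<le> s" "\<forall>t\<in>{0..t0}. f t \<le> f s" "0 \<le> t" "t \<le> s"
  shows "f t \<le> f s"
  using assms f_mono[of t s] by (cases "t0 \<le> t") auto

lemma eventually_f_le_f: "\<forall>\<^sub>F m in at_top. \<forall>t\<in>{0..m}. f t \<le> f m"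
  using eventually_f_dominates_initial[OF zero_less_one] eventually_ge_at_top[of t0]
  by eventually_elim (auto intro: f_le_if_dominates_initial)

lemma g'_nearly_constant:
  assumes "\<epsilon> > 0" "A > 0"
  shows "\<forall>\<^sub>F m in at_top. t0 < m - A / g' m \<and>
           (\<forall>t. m - A / g' m \<le> t \<and> t \<le> m \<longrightarrow> 1 - \<epsilon> \<le> g' t / g' m)"
proof -
  define \<delta> where "\<delta> = \<epsilon> / A"
  have \<delta>: "0 < \<delta>" using assms by (simp add: \<delta>_def)
  have "\<forall>\<^sub>F t in at_top. t0 \<le> t \<and> g'' t / (g' t)^2 < \<delta>"
    using eventually_ge_at_top[of t0] order_tendstoD(2)[OF g''_div_g'_sq_tendsto_0 \<delta>]
    by (rule eventually_conj)
  then obtain T where T0: "\<And>t. T \<le> t \<Longrightarrow> t0 \<le> t \<and> g'' t / (g' t)^2 < \<delta>"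
    unfolding eventually_at_top_linorder by blast
  have T: "t0 \<le> T" "\<And>t. T \<le> t \<Longrightarrow> g'' t \<le> \<delta> * (g' t)^2"
  proof -
    show "t0 \<le> T" using T0[of T] by simp
    fix t assume "T \<le> t"
    with T0[of t] g'_pos[of t] show "g'' t \<le> \<delta> * (g' t)^2" by (simp add: pos_divide_less_eq)
  qed
  have "0 < g' T" using g'_pos T(1) by simp
  show ?thesis
    using eventually_ge_at_top[of "T + 1 + A / g' T"]
  proof eventually_elim
    case (elim m)
    have "0 < A / g' T" using assms \<open>0 < g' T\<close> by simp
    then have "T \<le> m" using elim by linarith
    then have gm: "0 < g' m" using g'_pos T(1) by simp
    have "A / g' m \<le> A / g' T"
      using g'_mono[of T m] \<open>T \<le> m\<close> gm T(1) \<open>0 < g' T\<close> assms by (intro divide_left_mono) auto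
    then have low: "T + 1 \<le> m - A / g' m" using elim by linarith
    have "1 - \<epsilon> \<le> g' t / g' m" if t: "m - A / g' m \<le> t" "t \<le> m" for t
    proof -
      have "g' m - g' t \<le> \<delta> * (m - t) * (g' m)^2"
        using low t T \<delta> by (intro g'_increment_le) auto
      also have "\<dots> \<le> \<delta> * (A / g' m) * (g' m)^2"
        using t \<delta> by (intro mult_right_mono mult_left_mono) auto
      also have "\<dots> = \<epsilon> * g' m" using gm assms by (simp add: \<delta>_def power2_eq_square)
      finally show ?thesis using gm by (simp add: field_simps)
    qed
    then show ?case using low T(1) by auto
  qed
qed

lemma f_ratio_near_exp_in_window:
  assumes e1: "0 < e1" and window: "t0 < m - A / g' m"
    "\<forall>t. m - A / g' m \<le> t \<and> t \<le> m \<longrightarrow> 1 - e1 \<le> g' t / g' m"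
    and t: "m - A / g' m \<le> t" "t \<le> m"
  shows "\<bar>f t / f m - exp (g' m * (t - m))\<bar> \<le> e1 * A" "g m - g t \<le> A"
proof -
  define a where "a = g' m"
  have tt0: "t0 \<le> t" and mt0: "t0 \<le> m" using window t by auto
  have a: "a > 0" using g'_pos mt0 by (simp add: a_def)
  define x where "x = a * (m - t)"
  have x: "0 \<le> x" "x \<le> A" using t a by (auto simp: x_def a_def field_simps)
  have "(1 - e1) * a \<le> g' t" using window t a by (simp add: a_def field_simps)
  then have lo: "(1 - e1) * x \<le> g m - g t"
    using g_tangent_bounds(1)[OF tt0 t(2)] t by (smt (verit, best) mult.assoc mult_right_mono x_def)
  have hi: "g m - g t \<le> x" using g_tangent_bounds(2)[OF tt0 t(2)] by (simp add: x_def a_def)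
  then show "g m - g t \<le> A" using x by linarith
  have "f t / f m = exp (g t - g m)" using f_eq_exp_g tt0 mt0 by (simp add: exp_diff)
  moreover have "exp (g' m * (t - m)) = exp (- x)" by (simp add: x_def a_def algebra_simps)
  ultimately have "\<bar>f t / f m - exp (g' m * (t - m))\<bar> = \<bar>exp (g t - g m) - exp (- x)\<bar>" by simp
  also have "\<dots> \<le> \<bar>(g t - g m) - (- x)\<bar>"
    using g_mono[OF tt0 t(2)] x by (intro abs_exp_diff_le_nonpos) auto
  also have "\<dots> \<le> e1 * x" using lo hi by (simp add: algebra_simps)
  also have "\<dots> \<le> e1 * A" using x e1 by simp
  finally show "\<bar>f t / f m - exp (g' m * (t - m))\<bar> \<le> e1 * A" .
qed

lemma f_ratio_small_left_of_window:
  assumes e1: "0 < e1" "e1 * A \<le> exp (- A)" and A: "0 < A" and m: "t0 \<le> m"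
    and window: "t0 < m - A / g' m" "\<forall>t. m - A / g' m \<le> t \<and> t \<le> m \<longrightarrow> 1 - e1 \<le> g' t / g' m"
    and initial: "\<forall>t\<in>{0..t0}. f t \<le> exp (- A) * f m"
    and t: "0 \<le> t" "t \<le> m - A / g' m"
  shows "0 \<le> f t / f m" "f t / f m \<le> 2 * exp (- A)" "exp (g' m * (t - m)) \<le> exp (- A)"
proof -
  define t1 where "t1 = m - A / g' m"
  have pos: "0 < g' m" "0 < f m" using g'_pos f_pos m by auto
  have t1: "t0 < t1" "t1 \<le> m" "g' m * (t1 - m) = - A"
    using window(1) A pos by (simp_all add: t1_def)
  note near = f_ratio_near_exp_in_window[OF e1(1) window, of t1]
  have "f t1 / f m \<le> 2 * exp (- A)" using near(1) t1 e1(2) by (simp add: t1_def abs_le_iff)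
  have "exp (- A) \<le> exp (g t1 - g m)" using near(2) t1 by (simp add: t1_def)
  also have "\<dots> = f t1 / f m" using f_eq_exp_g t1 m by (simp add: exp_diff)
  finally have "exp (- A) * f m \<le> f t1" using pos by (simp add: pos_le_divide_eq)
  then have "\<forall>t\<in>{0..t0}. f t \<le> f t1" using initial by (auto intro: order_trans)
  then have "f t \<le> f t1"
    using t t1 by (intro f_le_if_dominates_initial) (auto simp: t1_def)
  then show "f t / f m \<le> 2 * exp (- A)"
    using \<open>f t1 / f m \<le> 2 * exp (- A)\<close> pos by (meson divide_right_mono less_imp_le order_trans)
  show "0 \<le> f t / f m" using f_nonneg t pos by simp
  have "g' m * (t - m) \<le> g' m * (t1 - m)"
    using t pos by (intro mult_left_mono) (auto simp: t1_def)
  then show "exp (g' m * (t - m)) \<le> exp (- A)" using t1 by simp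
qed

lemma f_ratio_near_exp:
  assumes "\<epsilon> > 0"
  shows "\<forall>\<^sub>F m in at_top. \<forall>t. 0 \<le> t \<and> t \<le> m \<longrightarrow> \<bar>f t / f m - exp (g' m * (t - m))\<bar> \<le> \<epsilon>"
proof -
  define e where "e = min \<epsilon> 1"
  (* Chosen so that left of the window both ratios lie in [0, 2 exp (-A)] = [0, e/2]. *)
  define A where "A = ln (4 / e)"
  define e1 where "e1 = e / (4 * A)"
  have e: "0 < e" "e \<le> \<epsilon>" "e \<le> 1" using assms by (auto simp: e_def)
  then have A: "0 < A" "exp (- A) = e / 4" by (simp_all add: A_def exp_minus)
  then have e1: "0 < e1" "e1 * A = e / 4" using e by (auto simp: e1_def)
  have "0 < e / 4" using e by simp
  show ?thesis
    using g'_nearly_constant[OF e1(1) A(1)] eventually_f_dominates_initial[OF \<open>0 < e / 4\<close>]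
      eventually_ge_at_top[of t0]
  proof eventually_elim
    case (elim m)
    show ?case
    proof (intro allI impI)
      fix t assume t: "0 \<le> t \<and> t \<le> m"
      show "\<bar>f t / f m - exp (g' m * (t - m))\<bar> \<le> \<epsilon>"
      proof (cases "m - A / g' m \<le> t")
        case True
        then show ?thesis using f_ratio_near_exp_in_window[OF e1(1), of m A t] elim t e1 e by auto
      next
        case False
        have "0 \<le> f t / f m" "f t / f m \<le> e / 2" "exp (g' m * (t - m)) \<le> e / 4"
          using f_ratio_small_left_of_window[OF e1(1) _ A(1), of m t, unfolded A(2)] elim t False e1(2)
          by auto
        then show ?thesis
          using e exp_gt_zero[of "g' m * (t - m)"] unfolding abs_le_iff by (intro conjI) linarith+
      qed
    qed
  qed
qed

end

section \<open>The Liouville bubble\<close>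

(* W(s) = -2 log(1 + s^2/8) solves W'' + W'/s = -exp W with W(0) = W'(0) = 0: it is the radial
   solution of -Delta W = exp W in the plane.  bubble' is its derivative. *)
definition bubble :: "real \<Rightarrow> real" where
  "bubble s = -2 * ln (1 + s^2 / 8)"

definition bubble' :: "real \<Rightarrow> real" where
  "bubble' s = - (s / 2) / (1 + s^2 / 8)"

definition bubble_phi :: "real \<Rightarrow> real" where
  "bubble_phi s = s^2 / (1 + s^2 / 8)^2"

definition bubble_psi :: "real \<Rightarrow> real" where
  "bubble_psi s = (s^2 / 2) / (1 + s^2 / 8)"

lemma bubble_denom_pos: "0 < 1 + s^2 / (8::real)"
  by (simp add: add_pos_nonneg)

lemma bubble_denom_ge_1: "1 \<le> 1 + s^2 / (8::real)"
  using zero_le_power2[of s] by linarith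

lemma bubble_nonpos: "bubble s \<le> 0"
  unfolding bubble_def using ln_ge_zero[OF bubble_denom_ge_1[of s]] by linarith

lemma bubble_0 [simp]: "bubble 0 = 0" and bubble'_0 [simp]: "bubble' 0 = 0"
  by (simp_all add: bubble_def bubble'_def)

lemma exp_bubble: "exp (bubble s) = 1 / (1 + s^2 / 8)^2"
proof -
  define d where "d = 1 + s^2 / 8"
  have d: "d > 0" using bubble_denom_pos by (simp add: d_def)
  have "bubble s = - (ln d + ln d)" unfolding bubble_def d_def by linarith
  then have "exp (bubble s) = inverse (exp (ln d) * exp (ln d))"
    by (simp only: exp_minus exp_add)
  also have "\<dots> = 1 / d^2" using d by (simp add: power2_eq_square divide_inverse)
  finally show ?thesis by (simp only: d_def)
qed

lemma has_real_derivative_bubble: "(bubble has_real_derivative bubble' s) (at s)"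
  unfolding bubble_def bubble'_def using bubble_denom_pos[of s]
  by (auto intro!: derivative_eq_intros simp: field_simps power2_eq_square)

lemma has_real_derivative_bubble':
  assumes "s > 0"
  shows "(bubble' has_real_derivative - exp (bubble s) - bubble' s / s) (at s)"
proof -
  define d where "d = 1 + s^2 / 8"
  have d: "d > 0" using bubble_denom_pos by (simp add: d_def)
  have num: "((\<lambda>s. - (s / 2)) has_real_derivative - 1 / 2) (at s)"
    by (auto intro!: derivative_eq_intros)
  have den: "((\<lambda>s. 1 + s^2 / 8) has_real_derivative s / 4) (at s)"
    by (auto intro!: derivative_eq_intros)
  have "(bubble' has_real_derivative ((- 1 / 2) * d - (- (s / 2)) * (s / 4)) / (d * d)) (at s)"
    using DERIV_divide[OF num den] d unfolding bubble'_def d_def by (simp add: fun_eq_iff)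
  moreover have "(- 1 / 2) * d - (- (s / 2)) * (s / 4) = d / 2 - 1"
    by (simp add: d_def power2_eq_square algebra_simps)
  moreover have "(d / 2 - 1) / (d * d) = - exp (bubble s) - bubble' s / s"
    using d assms unfolding exp_bubble bubble'_def d_def[symmetric]
    by (simp add: field_simps power2_eq_square)
  ultimately show ?thesis by (simp only:)
qed

lemma bubble_psi_eq: "- s * bubble' s = bubble_psi s"
  by (simp add: bubble'_def bubble_psi_def power2_eq_square)

lemma bubble_phi_eq: "s^2 * exp (bubble s) = bubble_phi s"
  by (simp add: exp_bubble bubble_phi_def)

lemma bubble_ge_minus_4:
  assumes "0 \<le> s" "s \<le> 4"
  shows "-4 \<le> bubble s"
proof -
  have "s * s \<le> 4 * 4" using assms by (intro mult_mono) auto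
  then have "1 + s^2 / 8 \<le> 3" by (simp add: power2_eq_square)
  then have "ln (1 + s^2 / 8) \<le> ln 3"
    using bubble_denom_pos[of s] by (subst ln_le_cancel_iff) auto
  also have "ln (3::real) \<le> 2" using ln_le_minus_one[of 3] by linarith
  finally show ?thesis unfolding bubble_def by linarith
qed

lemma abs_bubble'_le_1: "\<bar>bubble' s\<bar> \<le> 1"
proof -
  have "0 \<le> (\<bar>s\<bar> - 2)^2" by simp
  also have "\<dots> = s^2 + 4 - 4 * \<bar>s\<bar>" by (simp add: power2_diff)
  finally have "\<bar>s\<bar> / 2 \<le> 1 + s^2 / 8" by linarith
  then show ?thesis using bubble_denom_pos[of s] by (simp add: bubble'_def abs_divide)
qed

lemma two_minus_bubble_phi: "2 - bubble_phi s = 2 * (s^2 - 8)^2 / (8 + s^2)^2"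
proof -
  have p: "8 + s^2 > 0" by (simp add: add_pos_nonneg)
  define D where "D = (8 + s^2)^2"
  have D: "D > 0" using p by (simp add: D_def)
  have e8: "(1 + s^2 / 8)^2 = D / 64" by (simp add: D_def power2_eq_square field_simps)
  have "bubble_phi s = 64 * s^2 / D" unfolding bubble_phi_def e8 by simp
  then have "2 - bubble_phi s = (2 * D - 64 * s^2) / D" using D by (simp add: diff_divide_distrib)
  also have "2 * D - 64 * s^2 = 2 * (s^2 - 8)^2" by (simp add: D_def power2_eq_square algebra_simps)
  finally show ?thesis by (simp add: D_def)
qed

lemma bubble_phi_le_2: "bubble_phi s \<le> 2"
  using two_minus_bubble_phi[of s] by (smt (verit) divide_nonneg_nonneg zero_le_power2)

lemma bubble_at_2_sqrt_2: "bubble_phi (2 * sqrt 2) = 2" "bubble_psi (2 * sqrt 2) = 2"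
proof -
  have "(2 * sqrt 2)^2 = (8::real)" by (simp add: power_mult_distrib)
  then show "bubble_phi (2 * sqrt 2) = 2" "bubble_psi (2 * sqrt 2) = 2"
    by (simp_all add: bubble_phi_def bubble_psi_def)
qed

lemma bubble_phi_1: "bubble_phi 1 = 64 / 81" and bubble_phi_4: "bubble_phi 4 = 16 / 9"
  by (simp_all add: bubble_phi_def power2_eq_square)

lemma bubble_phi_near_max:
  assumes s: "1 \<le> s" "s \<le> 4" and near: "2 - bubble_phi s \<le> 2 * \<eta>"
    and eta: "\<eta> \<le> e^2 / 128" and e: "0 < e"
  shows "\<bar>s - 2 * sqrt 2\<bar> < e"
proof -
  have "2 * (s^2 - 8)^2 / (8 + s^2)^2 \<le> 2 * \<eta>"
    using near two_minus_bubble_phi[of s] by linarith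
  moreover have "8 + s^2 > 0" by (simp add: add_pos_nonneg)
  ultimately have "(s^2 - 8)^2 \<le> \<eta> * (8 + s^2)^2"
    by (simp add: field_simps)
  also have "\<dots> \<le> \<eta> * 24^2"
  proof (rule mult_left_mono)
    have "s * s \<le> 4 * 4" using s by (intro mult_mono) auto
    then have "s^2 \<le> 4^2" by (simp add: power2_eq_square)
    then show "(8 + s^2)^2 \<le> 24^2" by (intro power_mono) auto
    show "0 \<le> \<eta>" using near bubble_phi_le_2[of s] by linarith
  qed
  also have "\<dots> < (3 * e)^2"
    using eta mult_pos_pos[OF e e] by (simp add: power_mult_distrib power2_eq_square field_simps)
  finally have "\<bar>s^2 - 8\<bar>^2 < (3 * e)^2" by simp
  then have lt: "\<bar>s^2 - 8\<bar> < 3 * e" by (rule power_less_imp_less_base) (use e in simp)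
  have "1 \<le> sqrt (2::real)" by simp
  then have ge3: "3 \<le> s + 2 * sqrt 2" using s by linarith
  have "\<bar>s - 2 * sqrt 2\<bar> * 3 \<le> \<bar>s - 2 * sqrt 2\<bar> * (s + 2 * sqrt 2)"
    using ge3 by (intro mult_left_mono) auto
  also have "\<dots> = \<bar>s^2 - 8\<bar>"
  proof -
    have "s^2 - 8 = (s - 2 * sqrt 2) * (s + 2 * sqrt 2)"
      by (simp add: algebra_simps power2_eq_square)
    then show ?thesis using ge3 by (simp add: abs_mult)
  qed
  finally have "\<bar>s - 2 * sqrt 2\<bar> * 3 < 3 * e" using lt by (rule le_less_trans)
  then show ?thesis by simp
qed

lemma bubble_energy_inequality:
  fixes X Y D \<epsilon> s :: real
  assumes "s > 0" "\<bar>D\<bar> \<le> \<epsilon> + \<bar>X\<bar>"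
  shows "2 * X * Y - 2 * Y^2 / s - 2 * Y * D \<le> 3 * (X^2 + Y^2) + \<epsilon>^2"
proof -
  define p q where "p = \<bar>X\<bar>" and "q = \<bar>Y\<bar>"
  have "0 \<le> 2 * Y^2 / s" using assms(1) by simp
  moreover have "- (2 * Y * D) \<le> 2 * (q * \<epsilon>) + 2 * (p * q)"
    using mult_left_mono[OF assms(2) abs_ge_zero[of Y]] abs_ge_minus_self[of "Y * D"]
    by (simp add: abs_mult p_def q_def algebra_simps)
  moreover have "2 * X * Y \<le> 2 * (p * q)" by (simp add: p_def q_def abs_mult[symmetric])
  moreover have "2 * (p * q) \<le> X^2 + Y^2" "2 * (q * \<epsilon>) \<le> \<epsilon>^2 + Y^2"
    using zero_le_power2[of "p - q"] zero_le_power2[of "\<epsilon> - q"]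
    unfolding power2_diff by (simp_all add: p_def q_def algebra_simps)
  ultimately show ?thesis using zero_le_power2[of X] by (smt (verit))
qed

lemma continuous_on_bubble: "continuous_on S bubble"
  unfolding bubble_def using bubble_denom_pos
  by (intro continuous_intros) (auto simp: less_imp_neq[symmetric])

lemma continuous_on_bubble': "continuous_on S bubble'"
  unfolding bubble'_def using bubble_denom_pos
  by (intro continuous_intros) (auto simp: less_imp_neq[symmetric])

lemma bubble_energy_differential_inequality:
  fixes U U' G :: "real \<Rightarrow> real"
  assumes x: "0 < x"
    and dU: "(U has_real_derivative U' x) (at x)"
    and dU': "(U' has_real_derivative - G x - U' x / x) (at x)"
    and U_nonpos: "U x \<le> 0" and source: "\<bar>G x - exp (U x)\<bar> \<le> \<epsilon>"
  shows "\<exists>E'. ((\<lambda>s. (U s - bubble s)^2 + (U' s - bubble' s)^2) has_real_derivative E') (at x) \<and>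
           E' \<le> 3 * ((U x - bubble x)^2 + (U' x - bubble' x)^2) + \<epsilon>^2"
proof -
  define X Y D where "X = U x - bubble x" and "Y = U' x - bubble' x"
    and "D = G x - exp (bubble x)"
  have "((\<lambda>s. (U s - bubble s)^2 + (U' s - bubble' s)^2) has_real_derivative
          2 * X * Y + 2 * Y * ((- G x - U' x / x) - (- exp (bubble x) - bubble' x / x))) (at x)"
    unfolding X_def Y_def
    by (auto intro!: derivative_eq_intros dU dU' has_real_derivative_bubble
        has_real_derivative_bubble'[OF x] simp: algebra_simps)
  moreover have "2 * X * Y + 2 * Y * ((- G x - U' x / x) - (- exp (bubble x) - bubble' x / x))
      = 2 * X * Y - 2 * Y^2 / x - 2 * Y * D"
    using x by (simp add: Y_def D_def field_simps power2_eq_square)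
  moreover have "\<bar>D\<bar> \<le> \<epsilon> + \<bar>X\<bar>"
    using source abs_exp_diff_le_nonpos[OF U_nonpos bubble_nonpos[of x]]
    unfolding D_def X_def by linarith
  ultimately show ?thesis
    using bubble_energy_inequality[OF x, of D \<epsilon> X Y] unfolding X_def Y_def by auto
qed

(* Gronwall: E' <= 3 E + eps^2 for the energy E, so (E + eps^2/3) exp (-3 s) decreases. *)
lemma bubble_stability:
  fixes U U' G :: "real \<Rightarrow> real" and R \<epsilon> s :: real
  assumes cont: "continuous_on {0..R} U" "continuous_on {0..R} U'"
    and dU: "\<And>s. 0 < s \<Longrightarrow> s < R \<Longrightarrow> (U has_real_derivative U' s) (at s)"
    and dU': "\<And>s. 0 < s \<Longrightarrow> s < R \<Longrightarrow> (U' has_real_derivative - G s - U' s / s) (at s)"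
    and init: "U 0 = 0" "U' 0 = 0"
    and U_nonpos: "\<And>s. 0 < s \<Longrightarrow> s < R \<Longrightarrow> U s \<le> 0"
    and source: "\<And>s. 0 < s \<Longrightarrow> s < R \<Longrightarrow> \<bar>G s - exp (U s)\<bar> \<le> \<epsilon>"
    and s: "0 \<le> s" "s \<le> R"
  shows "(U s - bubble s)^2 + (U' s - bubble' s)^2 \<le> \<epsilon>^2 / 3 * exp (3 * s)"
proof -
  define E where "E = (\<lambda>s. (U s - bubble s)^2 + (U' s - bubble' s)^2)"
  define Z where "Z = (\<lambda>s. (E s + \<epsilon>^2 / 3) * exp (- 3 * s))"
  have "continuous_on {0..s} Z"
    unfolding Z_def E_def using s
    by (intro continuous_intros continuous_on_bubble continuous_on_bubble'
        continuous_on_subset[OF cont(1)] continuous_on_subset[OF cont(2)]) auto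
  moreover have "\<exists>y. (Z has_real_derivative y) (at x) \<and> y \<le> 0" if x: "0 < x" "x < s" for x
  proof -
    have xR: "x < R" using x s by simp
    obtain E' where E': "(E has_real_derivative E') (at x)" "E' \<le> 3 * E x + \<epsilon>^2"
      using bubble_energy_differential_inequality[where U = U and U' = U' and G = G,
          OF x(1) dU[OF x(1) xR] dU'[OF x(1) xR]
          U_nonpos[OF x(1) xR] source[OF x(1) xR]]
      unfolding E_def by blast
    have "(Z has_real_derivative (E' - 3 * (E x + \<epsilon>^2 / 3)) * exp (- 3 * x)) (at x)"
      unfolding Z_def by (auto intro!: derivative_eq_intros E'(1) simp: algebra_simps)
    moreover have "(E' - 3 * (E x + \<epsilon>^2 / 3)) * exp (- 3 * x) \<le> 0"
      using E'(2) by (intro mult_nonpos_nonneg) auto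
    ultimately show ?thesis by blast
  qed
  ultimately have "Z s \<le> Z 0"
    using s by (intro DERIV_nonpos_imp_decreasing_open[of 0 s Z]) (auto simp: less_eq_real_def)
  then have "E s + \<epsilon>^2 / 3 \<le> \<epsilon>^2 / 3 * exp (3 * s)"
    by (simp add: Z_def E_def init exp_minus field_simps)
  then show ?thesis using zero_le_power2[of \<epsilon>] unfolding E_def by linarith
qed

section \<open>Radial solutions\<close>

locale radial_solution =
  fixes f h :: "real \<Rightarrow> real" and lam mu :: real and u u' u'' :: "real \<Rightarrow> real"
  assumes u_C2: "C2_with {0..1} u u' u''"
    and equation: "\<And>r. 0 < r \<Longrightarrow> r < 1 \<Longrightarrow> - u'' r - u' r / r = lam * h r * f (u r)"
    and u_pos: "\<And>r. 0 < r \<Longrightarrow> r < 1 \<Longrightarrow> 0 < u r"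
    and u_0: "u 0 = mu" and u'_0: "u' 0 = 0" and u_1: "u 1 = 0"
    and lam_pos: "0 < lam"
    and h_pos: "\<And>r. 0 \<le> r \<Longrightarrow> r \<le> 1 \<Longrightarrow> 0 < h r"
    and f_nonneg: "\<And>t. 0 \<le> t \<Longrightarrow> 0 \<le> f t"
begin

lemma u_has_real_derivative:
  assumes "0 < r" "r < 1"
  shows "(u has_real_derivative u' r) (at r)"
    and "(u' has_real_derivative - lam * h r * f (u r) - u' r / r) (at r)"
proof -
  have "r \<in> interior {0..1}" using assms by simp
  note d = C2_with_has_real_derivative[OF u_C2 this]
  show "(u has_real_derivative u' r) (at r)" by (fact d(1))
  have "u'' r = - lam * h r * f (u r) - u' r / r" using equation[OF assms] by linarith
  with d(2) show "(u' has_real_derivative - lam * h r * f (u r) - u' r / r) (at r)" by simp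
qed

lemma flux_has_real_derivative:
  assumes "0 < r" "r < 1"
  shows "((\<lambda>r. r * u' r) has_real_derivative - r * (lam * h r * f (u r))) (at r)"
  using assms by (auto intro!: derivative_eq_intros u_has_real_derivative simp: field_simps)

lemma continuous_on_u: "continuous_on {0..1} u" "continuous_on {0..1} u'"
  using C2_with_continuous_on[OF u_C2] by auto

lemma u'_nonpos:
  assumes "0 \<le> r" "r \<le> 1"
  shows "u' r \<le> 0"
proof (cases "r = 0")
  case False
  have "r * u' r \<le> 0 * u' 0"
  proof (rule DERIV_nonpos_imp_decreasing_open[of 0 r])
    fix x assume x: "0 < x" "x < r"
    then have "0 \<le> x * (lam * h x * f (u x))"
      using assms lam_pos h_pos[of x] f_nonneg u_pos[of x] by (simp add: less_imp_le)
    then show "\<exists>y. ((\<lambda>r. r * u' r) has_real_derivative y) (at x) \<and> y \<le> 0"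
      using flux_has_real_derivative[of x] x assms by auto
  qed (use False assms continuous_on_u in \<open>auto intro!: continuous_intros elim: continuous_on_subset\<close>)
  then show ?thesis using False assms by (simp add: mult_le_0_iff)
qed (simp add: u'_0)

lemma u_bounds:
  assumes "0 \<le> r" "r \<le> 1"
  shows "0 \<le> u r" "u r \<le> mu"
proof -
  have "u b \<le> u a" if "0 \<le> a" "a \<le> b" "b \<le> 1" for a b
  proof (cases "a = b")
    case False
    show ?thesis
    proof (rule DERIV_nonpos_imp_decreasing_open[of a b])
      fix x assume "a < x" "x < b"
      then show "\<exists>y. (u has_real_derivative y) (at x) \<and> y \<le> 0"
        using that u_has_real_derivative(1)[of x] u'_nonpos[of x] by auto
    qed (use that False continuous_on_u in \<open>auto elim: continuous_on_subset\<close>)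
  qed simp
  then show "0 \<le> u r" "u r \<le> mu" using assms u_0 u_1 by (metis order_refl)+
qed

lemma u'_ge_source_bound:
  assumes source_le: "\<And>r. 0 \<le> r \<Longrightarrow> r \<le> 1 \<Longrightarrow> lam * h r * f (u r) \<le> c"
    and r: "0 < r" "r < 1"
  shows "- c * r / 2 \<le> u' r"
proof -
  have "0 * u' 0 + c * 0^2 / 2 \<le> r * u' r + c * r^2 / 2"
  proof (rule DERIV_nonneg_imp_increasing_open[of 0 r])
    fix x assume x: "0 < x" "x < r"
    then have "x * (lam * h x * f (u x)) \<le> x * c" using source_le[of x] r by simp
    moreover have "((\<lambda>r. r * u' r + c * r^2 / 2) has_real_derivative
        - x * (lam * h x * f (u x)) + c * x) (at x)"
      using x r by (auto intro!: derivative_eq_intros u_has_real_derivative simp: field_simps)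
    ultimately show "\<exists>y. ((\<lambda>r. r * u' r + c * r^2 / 2) has_real_derivative y) (at x) \<and> 0 \<le> y"
      by (intro exI[of _ "- x * (lam * h x * f (u x)) + c * x"]) (auto simp: mult.commute)
  qed (use r continuous_on_u in \<open>auto intro!: continuous_intros elim: continuous_on_subset\<close>)
  then have "r * (- c * r / 2) \<le> r * u' r" by (simp add: power2_eq_square algebra_simps)
  then show ?thesis using r mult_le_cancel_left_pos by blast
qed

lemma mu_le_source_bound:
  assumes h_le: "\<And>r. 0 \<le> r \<Longrightarrow> r \<le> 1 \<Longrightarrow> h r \<le> H"
    and f_le: "\<And>t. 0 \<le> t \<Longrightarrow> t \<le> mu \<Longrightarrow> f t \<le> F"
  shows "mu \<le> lam * H * F / 2"
proof -
  define c where "c = lam * H * F"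
  have source_le: "lam * h r * f (u r) \<le> c" if "0 \<le> r" "r \<le> 1" for r
    using mult_mono[OF h_le f_le, of r "u r"] h_le[of r] h_pos[of r] f_nonneg[of "u r"] u_bounds[of r]
      that lam_pos
    by (simp add: c_def mult.assoc)
  have c: "0 \<le> c" using source_le[of 0] lam_pos h_pos[of 0] f_nonneg[of "u 0"] u_bounds[of 0]
    by (smt (verit) mult_nonneg_nonneg zero_le_one)
  have "u 0 + c * 0 / 2 \<le> u 1 + c * 1 / 2"
  proof (rule DERIV_nonneg_imp_increasing_open[of 0 1])
    fix x :: real assume x: "0 < x" "x < 1"
    then have "- c / 2 \<le> u' x"
      using u'_ge_source_bound[OF source_le x] mult_left_le[of x c] c by auto
    then show "\<exists>y. ((\<lambda>r. u r + c * r / 2) has_real_derivative y) (at x) \<and> 0 \<le> y"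
      using x by (auto intro!: derivative_eq_intros u_has_real_derivative)
  qed (use continuous_on_u in \<open>auto intro!: continuous_intros\<close>)
  then show ?thesis by (simp add: u_0 u_1 c_def)
qed

end

section \<open>One solution at the blow-up scale\<close>

(* The factor exp (-6) absorbs the Gronwall growth
   exp (3 s) <= exp 12 on [0,4]. *)
locale bubble_window =
  H1_nonlinearity f f' g g' g'' t0 + radial_solution f h lam mu u u' u''
  for f f' g g' g'' t0 h lam mu u u' u'' +
  fixes \<eta> \<gamma> :: real
  assumes eta: "0 < \<eta>" "\<eta> \<le> 1"
    and gamma_eq: "\<gamma> = 1 / sqrt (lam * h 0 * f' mu)"
    and gamma_small: "4 * \<gamma> < 1"
    and mu_gt_t0: "t0 < mu"
    and h_near_h0: "\<And>r. 0 \<le> r \<Longrightarrow> r \<le> 4 * \<gamma> \<Longrightarrow> \<bar>h r / h 0 - 1\<bar> \<le> \<eta> * exp (-6) / 400"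
    and window_above_t0: "t0 < mu - 5 / g' mu"
    and g'_near_g'_mu: "\<And>t. mu - 5 / g' mu \<le> t \<Longrightarrow> t \<le> mu \<Longrightarrow> 1 - \<eta> / 100 \<le> g' t / g' mu"
    and f_near_exp:
      "\<And>t. 0 \<le> t \<Longrightarrow> t \<le> mu \<Longrightarrow> \<bar>f t / f mu - exp (g' mu * (t - mu))\<bar> \<le> \<eta> * exp (-6) / 200"
begin

definition blowup_u :: "real \<Rightarrow> real" where
  "blowup_u s = g' mu * (u (\<gamma> * s) - mu)"

definition blowup_u' :: "real \<Rightarrow> real" where
  "blowup_u' s = g' mu * \<gamma> * u' (\<gamma> * s)"

definition blowup_source :: "real \<Rightarrow> real" where
  "blowup_source s = g' mu * \<gamma>^2 * lam * h (\<gamma> * s) * f (u (\<gamma> * s))"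

lemma g'_mu_pos: "0 < g' mu" and f_mu_pos: "0 < f mu" and h_0_pos: "0 < h 0"
  using g'_pos f_pos h_pos mu_gt_t0 by auto

lemma gamma_pos: "0 < \<gamma>"
  using gamma_eq lam_pos h_0_pos f'_eq_f_times_g'[OF mu_gt_t0] f_mu_pos g'_mu_pos by simp

lemma gamma_sq: "\<gamma>^2 * (lam * h 0 * f mu * g' mu) = 1"
  using gamma_eq lam_pos h_0_pos f'_eq_f_times_g'[OF mu_gt_t0] f_mu_pos g'_mu_pos
  by (simp add: power_divide mult.assoc)

lemma scaled_radius:
  assumes "0 \<le> s" "s \<le> 4"
  shows "0 \<le> \<gamma> * s" "\<gamma> * s \<le> 4 * \<gamma>" "\<gamma> * s < 1"
proof -
  show "0 \<le> \<gamma> * s" "\<gamma> * s \<le> 4 * \<gamma>"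
    using assms gamma_pos by (simp_all add: mult.commute mult_right_mono)
  then show "\<gamma> * s < 1" using gamma_small by linarith
qed

lemma blowup_source_eq: "blowup_source s = (h (\<gamma> * s) / h 0) * (f (u (\<gamma> * s)) / f mu)"
proof -
  have "blowup_source s =
      (\<gamma>^2 * (lam * h 0 * f mu * g' mu)) * ((h (\<gamma> * s) / h 0) * (f (u (\<gamma> * s)) / f mu))"
    using h_0_pos f_mu_pos by (simp add: blowup_source_def field_simps)
  then show ?thesis by (simp only: gamma_sq mult_1)
qed

lemma blowup_u_nonpos:
  assumes "0 \<le> s" "s \<le> 4"
  shows "blowup_u s \<le> 0"
proof -
  note r = scaled_radius[OF assms]
  have "u (\<gamma> * s) \<le> mu" using u_bounds(2)[OF r(1)] r(3) by simp
  then show ?thesis using g'_mu_pos by (simp add: blowup_u_def mult_nonneg_nonpos)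
qed

lemma blowup_source_close:
  assumes "0 \<le> s" "s \<le> 4"
  shows "\<bar>blowup_source s - exp (blowup_u s)\<bar> \<le> \<eta> * exp (-6) / 100"
proof -
  define \<epsilon> where "\<epsilon> = \<eta> * exp (-6) / 100"
  have "\<eta> * exp (-6) \<le> 1 * 1" using eta by (intro mult_mono) auto
  then have "\<epsilon> \<le> 1" by (simp add: \<epsilon>_def)
  define F where "F = f (u (\<gamma> * s)) / f mu"
  note r = scaled_radius[OF assms]
  have F0: "0 \<le> F" using f_nonneg u_bounds r f_mu_pos by (simp add: F_def)
  have FU: "\<bar>F - exp (blowup_u s)\<bar> \<le> \<epsilon> / 2"
    using f_near_exp u_bounds r by (simp add: F_def blowup_u_def \<epsilon>_def)
  have "exp (blowup_u s) \<le> 1" using blowup_u_nonpos[OF assms] by simp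
  then have F2: "F \<le> 2" using FU \<open>\<epsilon> \<le> 1\<close> by linarith
  have "blowup_source s - F = (h (\<gamma> * s) / h 0 - 1) * F"
    unfolding blowup_source_eq F_def by (simp add: algebra_simps)
  then have "\<bar>blowup_source s - F\<bar> = \<bar>h (\<gamma> * s) / h 0 - 1\<bar> * F"
    using F0 by (simp add: abs_mult)
  also have "\<dots> \<le> (\<epsilon> / 4) * 2"
    using h_near_h0[OF r(1,2)] F2 F0 eta by (intro mult_mono) (auto simp: \<epsilon>_def)
  finally show ?thesis using FU unfolding \<epsilon>_def[symmetric] by linarith
qed

lemma blowup_u_has_real_derivative:
  assumes "0 < s" "s < 4"
  shows "(blowup_u has_real_derivative blowup_u' s) (at s)"
    and "(blowup_u' has_real_derivative - blowup_source s - blowup_u' s / s) (at s)"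
proof -
  have r: "0 < \<gamma> * s" "\<gamma> * s < 1"
    using scaled_radius(3)[of s] assms gamma_pos by auto
  have scale: "((\<lambda>s. \<gamma> * s) has_real_derivative \<gamma>) (at s)"
    by (auto intro!: derivative_eq_intros)
  note du = DERIV_chain2[OF u_has_real_derivative(1)[OF r] scale]
    DERIV_chain2[OF u_has_real_derivative(2)[OF r] scale]
  show "(blowup_u has_real_derivative blowup_u' s) (at s)"
    unfolding blowup_u_def blowup_u'_def by (auto intro!: derivative_eq_intros du)
  have "(blowup_u' has_real_derivative
      g' mu * \<gamma> * ((- lam * h (\<gamma> * s) * f (u (\<gamma> * s)) - u' (\<gamma> * s) / (\<gamma> * s)) * \<gamma>)) (at s)"
    unfolding blowup_u'_def by (rule DERIV_cmult[OF du(2)])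
  moreover have "g' mu * \<gamma> * ((- lam * h (\<gamma> * s) * f (u (\<gamma> * s)) - u' (\<gamma> * s) / (\<gamma> * s)) * \<gamma>)
      = - blowup_source s - blowup_u' s / s"
    unfolding blowup_u'_def blowup_source_def using assms gamma_pos
    by (simp add: field_simps power2_eq_square)
  ultimately show "(blowup_u' has_real_derivative - blowup_source s - blowup_u' s / s) (at s)"
    by simp
qed

lemma continuous_on_blowup_u: "continuous_on {0..4} blowup_u" "continuous_on {0..4} blowup_u'"
proof -
  have "continuous_on {0..4} (\<lambda>s. v (\<gamma> * s))" if "continuous_on {0..1} v" for v
    using scaled_radius(1,3)
    by (intro continuous_on_compose2[OF that]) (auto intro!: continuous_intros simp: less_imp_le)
  then show "continuous_on {0..4} blowup_u" "continuous_on {0..4} blowup_u'"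
    unfolding blowup_u_def blowup_u'_def using continuous_on_u
    by (auto intro!: continuous_intros)
qed

lemma blowup_near_bubble:
  assumes "0 \<le> s" "s \<le> 4"
  shows "\<bar>blowup_u s - bubble s\<bar> \<le> \<eta> / 100" "\<bar>blowup_u' s - bubble' s\<bar> \<le> \<eta> / 100"
proof -
  define \<epsilon> where "\<epsilon> = \<eta> * exp (-6) / 100"
  have "(blowup_u s - bubble s)^2 + (blowup_u' s - bubble' s)^2 \<le> \<epsilon>^2 / 3 * exp (3 * s)"
  proof (rule bubble_stability[where G = blowup_source and R = 4])
    show "blowup_u 0 = 0" "blowup_u' 0 = 0" by (simp_all add: blowup_u_def blowup_u'_def u_0 u'_0)
  qed (use eta assms continuous_on_blowup_u blowup_u_has_real_derivative blowup_u_nonpos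
      blowup_source_close in \<open>auto simp: \<epsilon>_def\<close>)
  also have "\<dots> \<le> \<epsilon>^2 * exp 12"
    using assms by (intro mult_mono) auto
  also have "\<dots> = (\<eta> / 100)^2"
    by (simp add: \<epsilon>_def power_mult_distrib power2_eq_square flip: exp_add)
  finally have "(blowup_u s - bubble s)^2 + (blowup_u' s - bubble' s)^2 \<le> (\<eta> / 100)^2" .
  then have "(blowup_u s - bubble s)^2 \<le> (\<eta> / 100)^2" "(blowup_u' s - bubble' s)^2 \<le> (\<eta> / 100)^2"
    using zero_le_power2 by (smt (verit))+
  then have "\<bar>blowup_u s - bubble s\<bar> \<le> \<bar>\<eta> / 100\<bar>" "\<bar>blowup_u' s - bubble' s\<bar> \<le> \<bar>\<eta> / 100\<bar>"
    by (simp_all only: abs_le_square_iff)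
  then show "\<bar>blowup_u s - bubble s\<bar> \<le> \<eta> / 100" "\<bar>blowup_u' s - bubble' s\<bar> \<le> \<eta> / 100"
    using eta by simp_all
qed

lemma u_in_window:
  assumes "0 \<le> s" "s \<le> 4"
  shows "mu - 5 / g' mu \<le> u (\<gamma> * s)" "u (\<gamma> * s) \<le> mu"
proof -
  have "-5 \<le> blowup_u s"
    using blowup_near_bubble(1)[OF assms] bubble_ge_minus_4[OF assms] eta by linarith
  then show "mu - 5 / g' mu \<le> u (\<gamma> * s)"
    using g'_mu_pos by (simp add: blowup_u_def field_simps)
  show "u (\<gamma> * s) \<le> mu"
    using u_bounds(2)[OF scaled_radius(1)[OF assms]] scaled_radius(3)[OF assms] by simp
qed

lemma g'_ratio_bounds:
  assumes "0 \<le> s" "s \<le> 4"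
  shows "t0 < u (\<gamma> * s)" "1 - \<eta> / 100 \<le> g' (u (\<gamma> * s)) / g' mu" "g' (u (\<gamma> * s)) / g' mu \<le> 1"
proof -
  note w = u_in_window[OF assms]
  show "t0 < u (\<gamma> * s)" using w window_above_t0 by linarith
  then show "g' (u (\<gamma> * s)) / g' mu \<le> 1"
    using g'_mono[of "u (\<gamma> * s)" mu] w g'_mu_pos by simp
  show "1 - \<eta> / 100 \<le> g' (u (\<gamma> * s)) / g' mu" using g'_near_g'_mu w by simp
qed

lemma phi_eq_blowup:
  assumes "0 \<le> s" "s \<le> 4"
  shows "phi lam h f' u (\<gamma> * s) = s^2 * blowup_source s * (g' (u (\<gamma> * s)) / g' mu)"
  using f'_eq_f_times_g'[OF g'_ratio_bounds(1)[OF assms]] g'_mu_pos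
  by (simp add: phi_def blowup_source_def power_mult_distrib)

lemma psi_eq_blowup: "psi g' u u' (\<gamma> * s) = - s * (g' (u (\<gamma> * s)) / g' mu) * blowup_u' s"
  using g'_mu_pos by (simp add: psi_def blowup_u'_def)

lemma phi_near_bubble:
  assumes "0 \<le> s" "s \<le> 4"
  shows "\<bar>phi lam h f' u (\<gamma> * s) - bubble_phi s\<bar> \<le> \<eta>"
proof -
  define G \<rho> where "G = blowup_source s" and "\<rho> = g' (u (\<gamma> * s)) / g' mu"
  have \<rho>: "\<bar>\<rho> - 1\<bar> \<le> \<eta> / 100" using g'_ratio_bounds[OF assms] by (simp add: \<rho>_def)
  have "\<eta> * exp (-6) \<le> \<eta> * 1" using eta by (intro mult_left_mono) auto
  then have "\<bar>G - exp (bubble s)\<bar> \<le> 2 * \<eta> / 100"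
    using blowup_source_close[OF assms] blowup_near_bubble(1)[OF assms]
      abs_exp_diff_le_nonpos[OF blowup_u_nonpos[OF assms] bubble_nonpos[of s]]
    unfolding G_def by linarith
  moreover have "exp (bubble s) \<le> 1" using bubble_nonpos[of s] by simp
  moreover have "0 \<le> G"
  proof -
    note r = scaled_radius[OF assms]
    have "0 < h (\<gamma> * s)" "0 \<le> f (u (\<gamma> * s))"
      using h_pos[OF r(1)] f_nonneg u_bounds(1)[OF r(1)] r(3) by auto
    then show ?thesis using h_0_pos f_mu_pos by (simp add: G_def blowup_source_eq)
  qed
  ultimately have G: "0 \<le> G" "G \<le> 2" "\<bar>G - exp (bubble s)\<bar> \<le> 2 * \<eta> / 100"
    using eta by linarith+
  have "\<bar>G * (\<rho> - 1)\<bar> \<le> 2 * (\<eta> / 100)"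
    unfolding abs_mult using G \<rho> by (intro mult_mono) auto
  moreover have "G * \<rho> - exp (bubble s) = G * (\<rho> - 1) + (G - exp (bubble s))"
    by (simp add: algebra_simps)
  ultimately have "\<bar>G * \<rho> - exp (bubble s)\<bar> \<le> 4 * \<eta> / 100"
    using G(3) by linarith
  have s2: "s^2 \<le> 16" using power_mono[OF assms(2) assms(1), of 2] by simp
  have "phi lam h f' u (\<gamma> * s) - bubble_phi s = s^2 * (G * \<rho> - exp (bubble s))"
    unfolding phi_eq_blowup[OF assms] bubble_phi_eq[symmetric] G_def \<rho>_def by (simp add: algebra_simps)
  then have "\<bar>phi lam h f' u (\<gamma> * s) - bubble_phi s\<bar> = s^2 * \<bar>G * \<rho> - exp (bubble s)\<bar>"
    by (simp add: abs_mult)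
  also have "\<dots> \<le> 16 * (4 * \<eta> / 100)"
    using s2 \<open>\<bar>G * \<rho> - exp (bubble s)\<bar> \<le> 4 * \<eta> / 100\<close> by (intro mult_mono) auto
  finally show ?thesis using eta by linarith
qed

lemma psi_near_bubble:
  assumes "0 \<le> s" "s \<le> 4"
  shows "\<bar>psi g' u u' (\<gamma> * s) - bubble_psi s\<bar> \<le> \<eta>"
proof -
  define \<rho> where "\<rho> = g' (u (\<gamma> * s)) / g' mu"
  define E where "E = \<rho> * (blowup_u' s - bubble' s) + (\<rho> - 1) * bubble' s"
  have \<rho>: "\<bar>\<rho>\<bar> \<le> 1" "\<bar>\<rho> - 1\<bar> \<le> \<eta> / 100"
    using g'_ratio_bounds[OF assms] eta by (auto simp: \<rho>_def)
  have "\<bar>\<rho> * (blowup_u' s - bubble' s)\<bar> \<le> 1 * (\<eta> / 100)"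
    unfolding abs_mult using \<rho> blowup_near_bubble(2)[OF assms] by (intro mult_mono) auto
  moreover have "\<bar>(\<rho> - 1) * bubble' s\<bar> \<le> (\<eta> / 100) * 1"
    unfolding abs_mult using \<rho> abs_bubble'_le_1[of s] eta by (intro mult_mono) auto
  ultimately have E: "\<bar>E\<bar> \<le> 2 * \<eta> / 100"
    using abs_triangle_ineq[of "\<rho> * (blowup_u' s - bubble' s)" "(\<rho> - 1) * bubble' s"]
    unfolding E_def by linarith
  have "psi g' u u' (\<gamma> * s) - bubble_psi s = - s * E"
    unfolding psi_eq_blowup bubble_psi_eq[symmetric] \<rho>_def E_def by (simp add: algebra_simps)
  then have "\<bar>psi g' u u' (\<gamma> * s) - bubble_psi s\<bar> = s * \<bar>E\<bar>"
    using assms by (simp add: abs_mult)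
  also have "\<dots> \<le> 4 * (2 * \<eta> / 100)" using assms E by (intro mult_mono) auto
  finally show ?thesis using eta by linarith
qed

lemma bubble_window_estimate:
  assumes "0 \<le> r" "r \<le> 4 * \<gamma>"
  shows "t0 < u r"
    and "\<bar>phi lam h f' u r - bubble_phi (r / \<gamma>)\<bar> \<le> \<eta>"
    and "\<bar>psi g' u u' r - bubble_psi (r / \<gamma>)\<bar> \<le> \<eta>"
    and "\<bar>g' (u r) / g' mu - 1\<bar> \<le> \<eta>"
    and "g' mu * (mu - u r) \<le> 5"
proof -
  define s where "s = r / \<gamma>"
  have s: "0 \<le> s" "s \<le> 4" and r: "r = \<gamma> * s"
    using assms gamma_pos by (auto simp: s_def field_simps)
  show "t0 < u r" using g'_ratio_bounds(1)[OF s] r by simp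
  show "\<bar>phi lam h f' u r - bubble_phi (r / \<gamma>)\<bar> \<le> \<eta>"
    using phi_near_bubble[OF s] r unfolding s_def[symmetric] by simp
  show "\<bar>psi g' u u' r - bubble_psi (r / \<gamma>)\<bar> \<le> \<eta>"
    using psi_near_bubble[OF s] r unfolding s_def[symmetric] by simp
  show "\<bar>g' (u r) / g' mu - 1\<bar> \<le> \<eta>"
    using g'_ratio_bounds(2,3)[OF s] r eta by (simp add: abs_le_iff)
  show "g' mu * (mu - u r) \<le> 5"
    using u_in_window(1)[OF s] r g'_mu_pos by (simp add: field_simps)
qed

end

section \<open>The blow-up sequence\<close>

locale radial_blowup = H1_nonlinearity f f' g g' g'' t0 for f f' g g' g'' t0 +
  fixes h :: "real \<Rightarrow> real" and lam mu :: "nat \<Rightarrow> real" and u u' u'' :: "nat \<Rightarrow> real \<Rightarrow> real"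
  assumes h_cont: "continuous_on {0..1} h"
    and solution: "\<And>n. radial_solution f h (lam n) (mu n) (u n) (u' n) (u'' n)"
    and mu_at_top: "filterlim mu at_top sequentially"
begin

definition scale :: "nat \<Rightarrow> real" where
  "scale n = 1 / sqrt (lam n * h 0 * f' (mu n))"

lemma h_0_pos: "0 < h 0"
  using radial_solution.h_pos[OF solution[of 0]] by simp

lemma eventually_at_mu: "eventually P at_top \<Longrightarrow> \<forall>\<^sub>F n in sequentially. P (mu n)"
  using mu_at_top by (simp add: filterlim_iff)

lemma blowup_rate_at_top: "filterlim (\<lambda>n. lam n * h 0 * f' (mu n)) at_top sequentially"
proof -
  obtain H where H: "\<And>r. r \<in> {0..1} \<Longrightarrow> norm (h r) \<le> H"
    using continuous_on_compact_bound[OF compact_Icc h_cont] by blast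
  have h_le: "h r \<le> H" if "0 \<le> r" "r \<le> 1" for r using H[of r] that by auto
  have H_pos: "0 < H" using h_le[of 0] h_0_pos by simp
  define K where "K = 2 * h 0 * g' t0 / H"
  have K: "0 < K" using h_0_pos g'_pos[of t0] H_pos by (simp add: K_def)
  show ?thesis
  proof (rule filterlim_at_top_mono[OF filterlim_tendsto_pos_mult_at_top[OF tendsto_const K mu_at_top]])
    show "\<forall>\<^sub>F n in sequentially. K * mu n \<le> lam n * h 0 * f' (mu n)"
      using eventually_at_mu[OF eventually_f_le_f] eventually_at_mu[OF eventually_gt_at_top[of t0]]
    proof eventually_elim
      case (elim n)
      interpret radial_solution f h "lam n" "mu n" "u n" "u' n" "u'' n" by (rule solution)
      have "mu n \<le> lam n * H * f (mu n) / 2"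
        by (rule mu_le_source_bound) (use h_le elim in auto)
      then have a: "2 * mu n / H \<le> lam n * f (mu n)" using H_pos by (simp add: field_simps)
      have b: "h 0 * g' t0 \<le> h 0 * g' (mu n)"
        using g'_mono[of t0 "mu n"] elim h_0_pos by simp
      have c: "0 \<le> 2 * mu n / H" "0 \<le> h 0 * g' t0"
        using elim t0_nonneg H_pos h_0_pos g'_pos[of t0] by auto
      have "(2 * mu n / H) * (h 0 * g' t0) \<le> (lam n * f (mu n)) * (h 0 * g' (mu n))"
        by (rule mult_mono[OF a b order_trans[OF c(1) a] c(2)])
      then show ?case using f'_eq_f_times_g'[of "mu n"] elim by (simp add: K_def mult_ac)
    qed
  qed
qed

lemma scale_tendsto_0: "scale \<longlonglongrightarrow> 0"
  and eventually_scale_pos: "\<forall>\<^sub>F n in sequentially. 0 < scale n"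
proof -
  have sqrt: "filterlim (\<lambda>n. sqrt (lam n * h 0 * f' (mu n))) at_top sequentially"
    by (rule filterlim_compose[OF sqrt_at_top blowup_rate_at_top])
  show "scale \<longlonglongrightarrow> 0"
    using tendsto_inverse_0_at_top[OF sqrt] by (simp add: scale_def[abs_def] inverse_eq_divide)
  have "\<forall>\<^sub>F n in sequentially. 0 < sqrt (lam n * h 0 * f' (mu n))"
    using sqrt unfolding filterlim_at_top_dense by blast
  then show "\<forall>\<^sub>F n in sequentially. 0 < scale n"
    by eventually_elim (simp add: scale_def)
qed

lemma h_ratio_near_1:
  assumes "0 < \<epsilon>"
  shows "\<exists>d>0. \<forall>r. 0 \<le> r \<longrightarrow> r \<le> d \<longrightarrow> \<bar>h r / h 0 - 1\<bar> \<le> \<epsilon>"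
proof -
  obtain d where d: "0 < d" "\<And>r. r \<in> {0..1} \<Longrightarrow> dist r 0 < d \<Longrightarrow> dist (h r) (h 0) < \<epsilon> * h 0"
    using h_cont assms h_0_pos unfolding continuous_on_iff
    by (metis atLeastAtMost_iff mult_pos_pos order_refl zero_le_one)
  show ?thesis
  proof (intro exI[of _ "min (d / 2) 1"] conjI allI impI)
    fix r assume r: "0 \<le> r" "r \<le> min (d / 2) 1"
    then have "\<bar>h r - h 0\<bar> < \<epsilon> * h 0" using d by (auto simp: dist_real_def)
    then show "\<bar>h r / h 0 - 1\<bar> \<le> \<epsilon>" using h_0_pos by (simp add: field_simps abs_divide)
  qed (use d in auto)
qed

lemma eventually_bubble_window:
  assumes "0 < \<eta>" "\<eta> \<le> 1"
  shows "\<forall>\<^sub>F n in sequentially.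
    bubble_window f f' g g' g'' t0 h (lam n) (mu n) (u n) (u' n) (u'' n) \<eta> (scale n)"
proof -
  obtain d where d: "0 < d" "\<And>r. 0 \<le> r \<Longrightarrow> r \<le> d \<Longrightarrow> \<bar>h r / h 0 - 1\<bar> \<le> \<eta> * exp (-6) / 400"
    using h_ratio_near_1[of "\<eta> * exp (-6) / 400"] assms by auto
  have "\<forall>\<^sub>F n in sequentially. scale n < min d 1 / 4"
    using scale_tendsto_0 d(1) by (intro order_tendstoD(2)) auto
  moreover note eventually_scale_pos
  moreover have "\<forall>\<^sub>F n in sequentially. t0 < mu n - 5 / g' (mu n) \<and>
      (\<forall>t. mu n - 5 / g' (mu n) \<le> t \<and> t \<le> mu n \<longrightarrow> 1 - \<eta> / 100 \<le> g' t / g' (mu n))"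
    using assms by (intro eventually_at_mu g'_nearly_constant) auto
  moreover have "\<forall>\<^sub>F n in sequentially. \<forall>t. 0 \<le> t \<and> t \<le> mu n \<longrightarrow>
      \<bar>f t / f (mu n) - exp (g' (mu n) * (t - mu n))\<bar> \<le> \<eta> * exp (-6) / 200"
    using assms by (intro eventually_at_mu f_ratio_near_exp) auto
  moreover have "\<forall>\<^sub>F n in sequentially. t0 < mu n"
    by (rule eventually_at_mu[OF eventually_gt_at_top])
  ultimately show ?thesis
  proof eventually_elim
    case (elim n)
    show ?case
      by (intro bubble_window.intro H1_nonlinearity_axioms solution bubble_window_axioms.intro)
        (use elim d assms in \<open>auto simp: scale_def\<close>)
  qed
qed

lemma continuous_on_phi: "continuous_on {0..1} (phi (lam n) h f' (u n))"
proof -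
  interpret radial_solution f h "lam n" "mu n" "u n" "u' n" "u'' n" by (rule solution)
  have "continuous_on {0..1} (\<lambda>r. f' (u n r))"
    using u_bounds(1)
    by (intro continuous_on_compose2[OF C1_with_continuous_on(2)[OF f_C1] continuous_on_u(1)]) auto
  then show ?thesis unfolding phi_def[abs_def] using h_cont by (intro continuous_intros)
qed

definition peak :: "nat \<Rightarrow> real" where
  "peak n = (SOME r. r \<in> {scale n..4 * scale n} \<and>
     (\<forall>y\<in>{scale n..4 * scale n}. phi (lam n) h f' (u n) y \<le> phi (lam n) h f' (u n) r))"

(* phi_n and psi_n are only defined where u_n >= t0, hence the condition on u n. *)
definition phi_local_max :: "nat \<Rightarrow> real \<Rightarrow> bool" where
  "phi_local_max n r \<longleftrightarrow> r \<in> {0<..<1} \<and>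
     (\<exists>\<delta>>0. \<forall>r'. \<bar>r' - r\<bar> < \<delta> \<longrightarrow> r' \<in> {0<..<1} \<and> t0 \<le> u n r' \<and>
        phi (lam n) h f' (u n) r' \<le> phi (lam n) h f' (u n) r)"

context
  fixes n :: nat and \<eta> :: real
  assumes window: "bubble_window f f' g g' g'' t0 h (lam n) (mu n) (u n) (u' n) (u'' n) \<eta> (scale n)"
begin

interpretation bubble_window f f' g g' g'' t0 h "lam n" "mu n" "u n" "u' n" "u'' n" \<eta> "scale n"
  by (rule window)

lemma peak_maximises:
  shows "peak n \<in> {scale n..4 * scale n}"
    and "\<And>y. y \<in> {scale n..4 * scale n} \<Longrightarrow> phi (lam n) h f' (u n) y \<le> phi (lam n) h f' (u n) (peak n)"
proof -
  have "continuous_on {scale n..4 * scale n} (phi (lam n) h f' (u n))"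
    using gamma_pos gamma_small by (intro continuous_on_subset[OF continuous_on_phi]) auto
  moreover have "{scale n..4 * scale n} \<noteq> {}" using gamma_pos by simp
  ultimately have "\<exists>r\<in>{scale n..4 * scale n}. \<forall>y\<in>{scale n..4 * scale n}.
      phi (lam n) h f' (u n) y \<le> phi (lam n) h f' (u n) r"
    by (intro continuous_attains_sup[OF compact_Icc])
  then have "\<exists>r. r \<in> {scale n..4 * scale n} \<and>
      (\<forall>y\<in>{scale n..4 * scale n}. phi (lam n) h f' (u n) y \<le> phi (lam n) h f' (u n) r)"
    by blast
  from someI_ex[OF this] show "peak n \<in> {scale n..4 * scale n}"
    and "\<And>y. y \<in> {scale n..4 * scale n} \<Longrightarrow> phi (lam n) h f' (u n) y \<le> phi (lam n) h f' (u n) (peak n)"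
    unfolding peak_def[symmetric] by blast+
qed

lemma peak_scaled_bounds: "1 \<le> peak n / scale n" "peak n / scale n \<le> 4"
  using peak_maximises(1) gamma_pos by (auto simp: field_simps)

lemma peak_estimate:
  shows "t0 < u n (peak n)" "u n (peak n) \<le> mu n"
    and "\<bar>phi (lam n) h f' (u n) (peak n) - bubble_phi (peak n / scale n)\<bar> \<le> \<eta>"
    and "\<bar>psi g' (u n) (u' n) (peak n) - bubble_psi (peak n / scale n)\<bar> \<le> \<eta>"
    and "\<bar>g' (u n (peak n)) / g' (mu n) - 1\<bar> \<le> \<eta>"
    and "g' (mu n) * (mu n - u n (peak n)) \<le> 5"
proof -
  have r: "0 \<le> peak n" "peak n \<le> 4 * scale n" using peak_maximises(1) gamma_pos by auto
  note bubble_window_estimate[OF r]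
  then show "t0 < u n (peak n)"
    and "\<bar>phi (lam n) h f' (u n) (peak n) - bubble_phi (peak n / scale n)\<bar> \<le> \<eta>"
    and "\<bar>psi g' (u n) (u' n) (peak n) - bubble_psi (peak n / scale n)\<bar> \<le> \<eta>"
    and "\<bar>g' (u n (peak n)) / g' (mu n) - 1\<bar> \<le> \<eta>"
    and "g' (mu n) * (mu n - u n (peak n)) \<le> 5"
    by auto
  show "u n (peak n) \<le> mu n" using u_bounds(2) r gamma_small by simp
qed

lemma peak_phi_bounds:
  shows "2 - \<eta> \<le> phi (lam n) h f' (u n) (peak n)"
    and "phi (lam n) h f' (u n) (peak n) \<le> 2 + \<eta>"
    and "2 - bubble_phi (peak n / scale n) \<le> 2 * \<eta>"
proof -
  have "1 \<le> sqrt (2::real)" "sqrt (2::real) \<le> sqrt 4"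
    by (simp_all only: real_sqrt_le_mono real_sqrt_ge_1_iff)
  then have k: "1 \<le> 2 * sqrt (2::real)" "2 * sqrt (2::real) \<le> 4"
    using real_sqrt_four by linarith+
  have mid: "2 * sqrt 2 * scale n \<in> {scale n..4 * scale n}"
    using mult_right_mono[OF k(1), of "scale n"] mult_right_mono[OF k(2), of "scale n"] gamma_pos
    by auto
  have "\<bar>phi (lam n) h f' (u n) (2 * sqrt 2 * scale n) - 2\<bar> \<le> \<eta>"
    using bubble_window_estimate(2)[of "2 * sqrt 2 * scale n"] mid gamma_pos bubble_at_2_sqrt_2(1)
    by simp
  then show ge: "2 - \<eta> \<le> phi (lam n) h f' (u n) (peak n)"
    using peak_maximises(2)[OF mid] by linarith
  show "phi (lam n) h f' (u n) (peak n) \<le> 2 + \<eta>"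
    using peak_estimate(3) bubble_phi_le_2[of "peak n / scale n"] by linarith
  show "2 - bubble_phi (peak n / scale n) \<le> 2 * \<eta>"
    using ge peak_estimate(3) by linarith
qed

lemma peak_local_max:
  assumes "\<eta> \<le> 1 / 100"
  shows "phi_local_max n (peak n)"
proof -
  have ends: "phi (lam n) h f' (u n) r < 2 - \<eta>" if "r = scale n \<or> r = 4 * scale n" for r
  proof -
    have "\<bar>phi (lam n) h f' (u n) r - bubble_phi (r / scale n)\<bar> \<le> \<eta>"
      using bubble_window_estimate(2)[of r] that gamma_pos by auto
    moreover have "bubble_phi (r / scale n) \<le> 16 / 9"
      using that gamma_pos bubble_phi_1 bubble_phi_4 by auto
    ultimately show ?thesis using assms by linarith
  qed
  then have "peak n \<noteq> scale n" "peak n \<noteq> 4 * scale n"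
    using peak_phi_bounds(1) by fastforce+
  then have inside: "scale n < peak n" "peak n < 4 * scale n"
    using peak_maximises(1) by auto
  show ?thesis
    unfolding phi_local_max_def
  proof (intro conjI exI[of _ "min (peak n - scale n) (4 * scale n - peak n)"] allI impI)
    fix r assume "\<bar>r - peak n\<bar> < min (peak n - scale n) (4 * scale n - peak n)"
    then have r: "scale n < r" "r < 4 * scale n" by (auto simp: abs_less_iff)
    then show "r \<in> {0<..<1}" using gamma_pos gamma_small by auto
    show "t0 \<le> u n r" using bubble_window_estimate(1)[of r] r gamma_pos by auto
    show "phi (lam n) h f' (u n) r \<le> phi (lam n) h f' (u n) (peak n)"
      using peak_maximises(2)[of r] r by auto
  qed (use inside gamma_pos gamma_small in auto)
qed

lemma peak_g_diff: "0 \<le> g (mu n) - g (u n (peak n))" "g (mu n) - g (u n (peak n)) \<le> 5"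
proof -
  note est = peak_estimate(1,2,6)
  show "0 \<le> g (mu n) - g (u n (peak n))" using g_mono est by auto
  have "g (mu n) - g (u n (peak n)) \<le> g' (mu n) * (mu n - u n (peak n))"
    using g_tangent_bounds(2) est by auto
  then show "g (mu n) - g (u n (peak n)) \<le> 5" using est by linarith
qed

end

lemma eventually_peak_local_max: "\<forall>\<^sub>F n in sequentially. phi_local_max n (peak n)"
proof -
  have "\<forall>\<^sub>F n in sequentially.
      bubble_window f f' g g' g'' t0 h (lam n) (mu n) (u n) (u' n) (u'' n) (1 / 100) (scale n)"
    by (rule eventually_bubble_window) auto
  then show ?thesis by eventually_elim (erule peak_local_max[OF _ order_refl])
qed

lemma peak_phi_tendsto: "(\<lambda>n. phi (lam n) h f' (u n) (peak n)) \<longlonglongrightarrow> 2"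
proof (rule tendsto_if_eventually_abs_le)
  fix \<eta> :: real assume "0 < \<eta>" "\<eta> \<le> 1"
  from eventually_bubble_window[OF this]
  show "\<forall>\<^sub>F n in sequentially. \<bar>phi (lam n) h f' (u n) (peak n) - 2\<bar> \<le> \<eta>"
  proof eventually_elim
    case (elim n)
    then show ?case using peak_phi_bounds(1,2)[OF elim] by (simp add: abs_le_iff)
  qed
qed

lemma peak_scaled_tendsto: "(\<lambda>n. peak n / scale n) \<longlonglongrightarrow> 2 * sqrt 2"
proof (rule tendsto_if_eventually_abs_le)
  fix e :: real assume e: "0 < e" "e \<le> 1"
  then have "0 < e^2 / 128" "e^2 / 128 \<le> 1"
    using power_le_one[of e 2] by auto
  from eventually_bubble_window[OF this]
  show "\<forall>\<^sub>F n in sequentially. \<bar>peak n / scale n - 2 * sqrt 2\<bar> \<le> e"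
  proof eventually_elim
    case (elim n)
    show ?case
      using bubble_phi_near_max[OF peak_scaled_bounds[OF elim] peak_phi_bounds(3)[OF elim] order_refl e(1)]
      by simp
  qed
qed

lemma peak_psi_tendsto: "(\<lambda>n. psi g' (u n) (u' n) (peak n)) \<longlonglongrightarrow> 2"
proof -
  have "(\<lambda>n. psi g' (u n) (u' n) (peak n) - bubble_psi (peak n / scale n)) \<longlonglongrightarrow> 0"
  proof (rule tendsto_if_eventually_abs_le)
    fix \<eta> :: real assume "0 < \<eta>" "\<eta> \<le> 1"
    from eventually_bubble_window[OF this]
    show "\<forall>\<^sub>F n in sequentially.
        \<bar>psi g' (u n) (u' n) (peak n) - bubble_psi (peak n / scale n) - 0\<bar> \<le> \<eta>"
      by eventually_elim (use peak_estimate(4) in auto)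
  qed
  moreover have "isCont bubble_psi (2 * sqrt 2)"
    unfolding bubble_psi_def[abs_def] using bubble_denom_pos
    by (intro continuous_intros) (auto simp: less_imp_neq[symmetric])
  then have "(\<lambda>n. bubble_psi (peak n / scale n)) \<longlonglongrightarrow> bubble_psi (2 * sqrt 2)"
    by (rule isCont_tendsto_compose[OF _ peak_scaled_tendsto])
  ultimately have "(\<lambda>n. (psi g' (u n) (u' n) (peak n) - bubble_psi (peak n / scale n))
      + bubble_psi (peak n / scale n)) \<longlonglongrightarrow> 0 + bubble_psi (2 * sqrt 2)"
    by (rule tendsto_add)
  then show ?thesis by (simp add: bubble_at_2_sqrt_2(2))
qed

lemma peak_g'_ratio_tendsto: "(\<lambda>n. g' (u n (peak n)) / g' (mu n)) \<longlonglongrightarrow> 1"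
proof (rule tendsto_if_eventually_abs_le)
  fix \<eta> :: real assume "0 < \<eta>" "\<eta> \<le> 1"
  from eventually_bubble_window[OF this]
  show "\<forall>\<^sub>F n in sequentially. \<bar>g' (u n (peak n)) / g' (mu n) - 1\<bar> \<le> \<eta>"
    by eventually_elim (rule peak_estimate(5))
qed

lemma eventually_peak_g_diff:
  "\<forall>\<^sub>F n in sequentially. 0 < g (mu n) \<and> 0 < g' (mu n) \<and>
     0 \<le> g (mu n) - g (u n (peak n)) \<and> g (mu n) - g (u n (peak n)) \<le> 5 \<and>
     0 \<le> mu n - u n (peak n) \<and> g' (mu n) * (mu n - u n (peak n)) \<le> 5"
proof -
  have "\<forall>\<^sub>F n in sequentially. 0 < g (mu n)"
    using filterlim_compose[OF g_at_top mu_at_top] by (simp add: filterlim_at_top_dense)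
  moreover have "\<forall>\<^sub>F n in sequentially.
      bubble_window f f' g g' g'' t0 h (lam n) (mu n) (u n) (u' n) (u'' n) 1 (scale n)"
    by (rule eventually_bubble_window) auto
  ultimately show ?thesis
  proof eventually_elim
    case (elim n)
    then show ?case
      using peak_g_diff[OF elim(2)] peak_estimate(1,2,6)[OF elim(2)] g'_pos[of "mu n"] by auto
  qed
qed

lemma peak_g_ratio_tendsto: "(\<lambda>n. g (u n (peak n)) / g (mu n)) \<longlonglongrightarrow> 1"
proof -
  have "(\<lambda>n. 5 * inverse (g (mu n))) \<longlonglongrightarrow> 5 * 0"
    by (intro tendsto_mult tendsto_const tendsto_inverse_0_at_top filterlim_compose[OF g_at_top mu_at_top])
  then have lim: "(\<lambda>n. 5 * inverse (g (mu n))) \<longlonglongrightarrow> 0" by simp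
  have "\<forall>\<^sub>F n in sequentially. norm (g (u n (peak n)) / g (mu n) - 1) \<le> 5 * inverse (g (mu n))"
    using eventually_peak_g_diff
  proof eventually_elim
    case (elim n)
    then have g: "0 < g (mu n)" and d: "0 \<le> g (mu n) - g (u n (peak n))" "g (mu n) - g (u n (peak n)) \<le> 5"
      by auto
    have "g (u n (peak n)) / g (mu n) - 1 = - ((g (mu n) - g (u n (peak n))) / g (mu n))"
      using g by (simp add: diff_divide_distrib)
    then have "norm (g (u n (peak n)) / g (mu n) - 1) = (g (mu n) - g (u n (peak n))) / g (mu n)"
      using g d by simp
    also have "\<dots> \<le> 5 / g (mu n)" using g d by (intro divide_right_mono) auto
    finally show ?case by (simp add: divide_inverse)
  qed
  then have "(\<lambda>n. g (u n (peak n)) / g (mu n) - 1) \<longlonglongrightarrow> 0"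
    using lim by (rule Lim_null_comparison)
  then show ?thesis by (simp add: LIM_zero_iff)
qed

lemma peak_u_bigo:
  "(\<lambda>n. (u n (peak n) - mu n) / (g (mu n) / g' (mu n))) \<in> O(\<lambda>n. 1 / g (mu n))"
proof (rule bigoI[of _ 5])
  show "\<forall>\<^sub>F n in sequentially.
      norm ((u n (peak n) - mu n) / (g (mu n) / g' (mu n))) \<le> 5 * norm (1 / g (mu n))"
    using eventually_peak_g_diff
  proof eventually_elim
    case (elim n)
    then have g: "0 < g (mu n)" "0 < g' (mu n)"
      and d: "0 \<le> mu n - u n (peak n)" "g' (mu n) * (mu n - u n (peak n)) \<le> 5"
      by auto
    have "(u n (peak n) - mu n) / (g (mu n) / g' (mu n))
        = - (g' (mu n) * (mu n - u n (peak n)) / g (mu n))"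
      using g by (simp add: field_simps)
    then have "norm ((u n (peak n) - mu n) / (g (mu n) / g' (mu n)))
        = g' (mu n) * (mu n - u n (peak n)) / g (mu n)"
      using g d by simp
    also have "\<dots> \<le> 5 / g (mu n)" using g d by (intro divide_right_mono) auto
    finally show ?case using g by simp
  qed
qed

end

theorem lemma3p3:
  fixes h h' f f' f'' g g' g'' :: "real \<Rightarrow> real"
    and t0 :: real
    and lam mu :: "nat \<Rightarrow> real"
    and u u' u'' :: "nat \<Rightarrow> real \<Rightarrow> real"
  assumes h_C1: "C1_with {0..1} h h'"
    and h_pos: "\<forall>r\<in>{0..1}. h r > 0"
    and f_C1: "C1_with {0..} f f'"
    and f_nonneg: "\<forall>t\<ge>0. f t \<ge> 0"
    and t0: "t0 \<ge> 0"
    and f_pos: "\<forall>t\<ge>t0. f t > 0"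
    and f_C2: "C2_with {t0..} f f' f''"
    and g_def: "\<forall>t\<ge>t0. g t = ln (f t)"
    and g_C2: "C2_with {t0..} g g' g''"
    and H1: "H1 t0 f g g' g''"
    and lam_pos: "\<forall>n. lam n > 0"
    and mu_pos: "\<forall>n. mu n > 0"
    and u_C2: "\<forall>n. C2_with {0..1} (u n) (u' n) (u'' n)"
    and eq: "\<forall>n. \<forall>r\<in>{0<..<1}. - u'' n r - u' n r / r = lam n * h r * f (u n r)"
    and u_pos: "\<forall>n. \<forall>r\<in>{0<..<1}. u n r > 0"
    and u0: "\<forall>n. u n 0 = mu n"
    and u'0: "\<forall>n. u' n 0 = 0"
    and u1: "\<forall>n. u n 1 = 0"
    and mu_lim: "filterlim mu at_top sequentially"
  shows "\<exists>\<sigma>::nat \<Rightarrow> nat. strict_mono \<sigma> \<and> (\<exists>r1::nat \<Rightarrow> real.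
     (\<forall>n. r1 n \<in> {0<..<1} \<and>
        (\<exists>\<delta>>0. \<forall>r. \<bar>r - r1 n\<bar> < \<delta> \<longrightarrow>
            r \<in> {0<..<1} \<and> u (\<sigma> n) r \<ge> t0 \<and>
            phi (lam (\<sigma> n)) h f' (u (\<sigma> n)) r \<le> phi (lam (\<sigma> n)) h f' (u (\<sigma> n)) (r1 n))) \<and>
     (\<lambda>n. phi (lam (\<sigma> n)) h f' (u (\<sigma> n)) (r1 n)) \<longlonglongrightarrow> 2 \<and>
     (\<lambda>n. psi g' (u (\<sigma> n)) (u' (\<sigma> n)) (r1 n)) \<longlonglongrightarrow> 2 \<and>
     (\<lambda>n. r1 n / (1 / sqrt (lam (\<sigma> n) * h 0 * f' (mu (\<sigma> n))))) \<longlonglongrightarrow> 2 * sqrt 2 \<and>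
     (\<lambda>n. (u (\<sigma> n) (r1 n) - mu (\<sigma> n)) / (g (mu (\<sigma> n)) / g' (mu (\<sigma> n))))
        \<in> O(\<lambda>n. 1 / g (mu (\<sigma> n))) \<and>
     (\<lambda>n. g (u (\<sigma> n) (r1 n)) / g (mu (\<sigma> n))) \<longlonglongrightarrow> 1 \<and>
     (\<lambda>n. g' (u (\<sigma> n) (r1 n)) / g' (mu (\<sigma> n))) \<longlonglongrightarrow> 1)"
proof -
  have solution: "radial_solution f h (lam n) (mu n) (u n) (u' n) (u'' n)" for n
    using u_C2 eq u_pos u0 u'0 u1 lam_pos h_pos f_nonneg by unfold_locales auto
  interpret radial_blowup f f' g g' g'' t0 h lam mu u u' u''
    using f_C1 f_nonneg t0 f_pos g_def g_C2 H1 C1_with_continuous_on(1)[OF h_C1] solution mu_lim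
    by (intro radial_blowup.intro H1_nonlinearity.intro radial_blowup_axioms.intro) auto
  obtain N where "\<And>n. N \<le> n \<Longrightarrow> phi_local_max n (peak n)"
    using eventually_peak_local_max unfolding eventually_sequentially by blast
  then have local_max: "\<forall>n. phi_local_max (n + N) (peak (n + N))" by simp
  have shift: "strict_mono (\<lambda>n. n + N)" by (simp add: strict_mono_def)
  have sub: "(\<lambda>n. X (n + N)) \<longlonglongrightarrow> L" if "X \<longlonglongrightarrow> L" for X :: "nat \<Rightarrow> real" and L
    using LIMSEQ_subseq_LIMSEQ[OF that shift] by (simp add: o_def)
  show ?thesis
    using shift local_max[unfolded phi_local_max_def] sub[OF peak_phi_tendsto] sub[OF peak_psi_tendsto]
      sub[OF peak_scaled_tendsto, unfolded scale_def]
      landau_o.big.compose[OF peak_u_bigo filterlim_subseq[OF shift]]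
      sub[OF peak_g_ratio_tendsto] sub[OF peak_g'_ratio_tendsto]
    by (intro exI[of _ "\<lambda>n. n + N"] exI[of _ "\<lambda>n. peak (n + N)"] conjI) assumption+
qed

end
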